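(* $$\sum _{n=0}^{\infty } \frac{\binom{2 n}{n}^2 H_{2 n}}{16^n(2 n - 1)} = \frac{6 \ln (2)-2}{\pi }.$$
   Context: $H_k = \sum_{j=1}^k \frac1j$ is the $k$-th harmonic number, with $H_0 = 0$. *)

theory Defs
  imports "HOL-Analysis.Analysis"
begin

end

theory Submission
  imports Defs "HOL-Real_Asymp.Real_Asymp"
begin

text \<open>
  The summand is \<open>- hyp_term 1 n * H\<^sub>2\<^sub>n\<close>, where \<open>hyp_term c n\<close> is the \<open>n\<close>-th term of Gauss's
  series \<open>F(c) = \<^sub>2F\<^sub>1(1/2, -1/2; c; 1)\<close> (\<open>hyp_sum\<close>). Split \<open>H\<^sub>2\<^sub>n = (H\<^sub>2\<^sub>n - H\<^sub>n) + H\<^sub>n\<close>.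
  The first part has closed-form partial sums and, by Wallis' product and
  \<open>H\<^sub>2\<^sub>N - H\<^sub>N \<longrightarrow> ln 2\<close>, sums to \<open>2/pi * (ln 2 - 1)\<close>. The second part is \<open>K(1)\<close>, where
  \<open>K(c) = \<Sum>n. hyp_term c n * (1/c + ... + 1/(c+n-1)) = -F'(c)\<close> (\<open>hyp_dsum\<close>).
  Gauss's contiguous relation \<open>c\<^sup>2 F(c) = (c\<^sup>2 - 1/4) F(c+1)\<close> and its derivative in \<open>c\<close> both
  telescope; together they give \<open>K(c)/F(c) - K(c+1)/F(c+1) = 2/c - 2/(2c-1) - 2/(2c+1)\<close>.
  As \<open>F(c) \<ge> F(1) = 2/pi\<close> and \<open>K(c) = O(1/c)\<close>, summing over \<open>c = 1, 2, ...\<close> yields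
  \<open>K(1)/F(1) = 2 - 4 ln 2\<close>.
\<close>

section \<open>Central binomial coefficients and harmonic numbers\<close>

lemma central_binomial_Suc:
  "real ((2 * Suc n) choose Suc n) = 2 * (2 * real n + 1) / (real n + 1) * real ((2 * n) choose n)"
proof -
  have "real ((2 * Suc n) choose Suc n) = fact (2 * Suc n) / (fact (Suc n) * fact (Suc n))"
    by (subst binomial_fact) auto
  also have "fact (2 * Suc n) = (2 * real n + 2) * (2 * real n + 1) * fact (2 * n)"
    by (simp add: algebra_simps)
  also have "fact (Suc n) = (real n + 1) * fact n"
    by (simp add: algebra_simps)
  also have "fact (2 * n) = real ((2 * n) choose n) * (fact n * fact n)"
    by (subst binomial_fact) auto
  also have "(2 * real n + 2) * (2 * real n + 1) * (real ((2 * n) choose n) * (fact n * fact n))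
      / ((real n + 1) * fact n * ((real n + 1) * fact n))
      = 2 * (2 * real n + 1) / (real n + 1) * real ((2 * n) choose n)"
    by (simp add: divide_simps) (simp add: algebra_simps)
  finally show ?thesis .
qed

definition central_sq :: "nat \<Rightarrow> real" where
  "central_sq n = real ((2 * n) choose n) ^ 2 / 16 ^ n"

lemma central_sq_Suc: "central_sq (Suc n) = central_sq n * ((2 * real n + 1) / (2 * real n + 2)) ^ 2"
proof -
  have "(2 * real n + 2) ^ 2 = 4 * (real n + 1) ^ 2" by (simp add: power2_eq_square algebra_simps)
  then show ?thesis
    unfolding central_sq_def central_binomial_Suc power_mult_distrib power_divide
    by (simp add: field_simps)
qed

lemma two_real_minus_one_neq_zero: "2 * real n - 1 \<noteq> 0"
proof
  assume "2 * real n - 1 = 0"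
  then have "real (2 * n) = real (1 :: nat)"
    by simp
  then have "2 * n = 1"
    by (simp only: of_nat_eq_iff)
  then show False
    by presburger
qed

lemma harm_le_two_sqrt: "harm n \<le> 2 * sqrt (real n)"
proof (cases "n = 0")
  case False
  then have "harm n - ln (real n) \<le> harm 1 - ln (real 1)"
    by (intro euler_mascheroni_sequence_decreasing) auto
  moreover have "ln (real n) = 2 * ln (sqrt (real n))"
    using False by (simp add: ln_sqrt)
  moreover have "ln (sqrt (real n)) \<le> sqrt (real n) - 1"
    using False by (intro ln_le_minus_one) simp
  ultimately show ?thesis by (simp add: harm_def)
qed (simp add: harm_def)

lemma harm_double_Suc:
  "harm (2 * Suc m) = harm (2 * m) + 1 / (2 * real m + 1) + 1 / (2 * real m + 2)"
proof -
  have "2 * Suc m = Suc (Suc (2 * m))" by simp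
  then show ?thesis by (simp add: harm_Suc inverse_eq_divide add_ac)
qed

lemma harm_double_lim: "(\<lambda>n. harm (2 * n) - harm n :: real) \<longlonglongrightarrow> ln 2"
proof -
  define e where "e n = harm n - ln (real n)" for n
  have e: "e \<longlonglongrightarrow> euler_mascheroni"
    unfolding e_def by (rule euler_mascheroni_LIMSEQ)
  have "(\<lambda>n. e (2 * n)) \<longlonglongrightarrow> euler_mascheroni"
    using LIMSEQ_subseq_LIMSEQ[OF e, of "\<lambda>n. 2 * n"] by (simp add: strict_mono_def o_def)
  then have "(\<lambda>n. e (2 * n) - e n + ln 2) \<longlonglongrightarrow> euler_mascheroni - euler_mascheroni + ln 2"
    by (intro tendsto_intros e)
  moreover have "\<forall>\<^sub>F n in sequentially. e (2 * n) - e n + ln 2 = harm (2 * n) - harm n"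
    unfolding eventually_sequentially by (intro exI[of _ 1]) (simp add: e_def ln_mult)
  ultimately show ?thesis
    by (simp add: Lim_transform_eventually)
qed

lemma sums_by_partial_sums:
  fixes f :: "nat \<Rightarrow> 'a::real_normed_vector"
  assumes "\<And>N. (\<Sum>n<Suc N. f n) = g N" and "g \<longlonglongrightarrow> l"
  shows "f sums l"
  unfolding sums_def by (rule LIMSEQ_imp_Suc) (use assms in simp)

section \<open>The series \<open>\<^sub>2F\<^sub>1(1/2, -1/2; c; 1)\<close> and its \<open>c\<close>-derivative\<close>

fun hyp_term :: "real \<Rightarrow> nat \<Rightarrow> real" where
  "hyp_term c 0 = 1"
| "hyp_term c (Suc n) = hyp_term c n * ((real n + 1/2) * (real n - 1/2)) / ((real n + 1) * (c + real n))"

definition shifted_harm :: "real \<Rightarrow> nat \<Rightarrow> real" where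
  "shifted_harm c n = (\<Sum>k<n. 1 / (c + real k))"

definition hyp_sum :: "real \<Rightarrow> real" where
  "hyp_sum c = (\<Sum>n. hyp_term c n)"

definition hyp_dsum :: "real \<Rightarrow> real" where
  "hyp_dsum c = (\<Sum>n. hyp_term c n * shifted_harm c n)"

lemma hyp_term_one: "hyp_term 1 n = - central_sq n / (2 * real n - 1)"
proof (induction n)
  case (Suc n)
  have "2 * real n + 1 \<noteq> 0" "real n + 1 \<noteq> 0" by linarith+
  with two_real_minus_one_neq_zero[of n] show ?case
    unfolding hyp_term.simps Suc.IH central_sq_Suc
    by (simp add: divide_simps) (simp add: algebra_simps power2_eq_square)
qed (simp add: central_sq_def)

lemma hyp_term_shift:
  assumes "c > 0"
  shows "hyp_term (c + 1) n = hyp_term c n * c / (c + real n)"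
proof (induction n)
  case (Suc n)
  have "c + real n \<noteq> 0" "c + real n + 1 \<noteq> 0" "c + 1 + real n \<noteq> 0"
    using assms by linarith+
  then show ?case
    unfolding hyp_term.simps Suc.IH by (simp add: divide_simps) (simp add: algebra_simps)
qed (use assms in simp)

lemma shifted_harm_Suc: "shifted_harm c (Suc n) = shifted_harm c n + 1 / (c + real n)"
  unfolding shifted_harm_def by simp

lemma shifted_harm_shift: "shifted_harm (c + 1) n = shifted_harm c n - 1 / c + 1 / (c + real n)"
  by (induction n) (simp_all add: shifted_harm_def algebra_simps)

lemma shifted_harm_one: "shifted_harm 1 n = harm n"
  unfolding shifted_harm_def harm_altdef by (intro sum.cong) (auto simp: field_simps)

lemma shifted_harm_nonneg: "c \<ge> 0 \<Longrightarrow> shifted_harm c n \<ge> 0"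
  unfolding shifted_harm_def by (intro sum_nonneg) auto

lemma shifted_harm_le_harm: "c \<ge> 1 \<Longrightarrow> shifted_harm c n \<le> harm n"
  unfolding shifted_harm_one[symmetric] shifted_harm_def by (intro sum_mono divide_left_mono) auto

lemma hyp_term_bound:
  assumes "c \<ge> 1" and "n \<ge> 1"
  shows "c * \<bar>hyp_term c n\<bar> \<le> 1 / real n ^ 2"
  using assms(2)
proof (induction n rule: nat_induct_at_least)
  case base
  then show ?case using assms(1) by simp
next
  case (Suc n)
  define r where "r = ((real n + 1/2) * (real n - 1/2)) / ((real n + 1) * (c + real n))"
  have n: "real n \<ge> 1" using Suc.hyps by simp
  have num: "(real n + 1/2) * (real n - 1/2) = real n ^ 2 - 1/4"
    by (simp add: power2_eq_square algebra_simps)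
  have nsq: "1 \<le> real n ^ 2" using n by simp
  have r0: "0 \<le> r"
    unfolding r_def num using nsq n assms(1) by (intro divide_nonneg_pos mult_pos_pos) linarith+
  have r1: "r \<le> real n ^ 2 / (real n + 1) ^ 2"
    unfolding r_def num power2_eq_square[of "real n + 1"] using nsq n assms(1)
    by (intro frac_le mult_left_mono mult_pos_pos) linarith+
  have "hyp_term c (Suc n) = hyp_term c n * r"
    by (simp add: r_def)
  then have "c * \<bar>hyp_term c (Suc n)\<bar> = c * \<bar>hyp_term c n\<bar> * r"
    using r0 by (simp add: abs_mult)
  also have "\<dots> \<le> 1 / real n ^ 2 * (real n ^ 2 / (real n + 1) ^ 2)"
    using Suc.IH r0 r1 by (intro mult_mono) auto
  also have "\<dots> = 1 / real (Suc n) ^ 2"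
    using n by (simp add: field_simps)
  finally show ?case .
qed

lemma hyp_term_abs_le:
  assumes "c \<ge> 1" and "n \<ge> 1"
  shows "\<bar>hyp_term c n\<bar> \<le> 1 / (c * real n ^ 2)"
proof -
  have "\<bar>hyp_term c n\<bar> * c \<le> 1 / real n ^ 2"
    using hyp_term_bound[OF assms] by (simp add: mult.commute)
  then have "\<bar>hyp_term c n\<bar> \<le> (1 / real n ^ 2) / c"
    using assms(1) by (subst pos_le_divide_eq) simp_all
  then show ?thesis
    by (simp add: mult.commute)
qed

lemma hyp_term_summable:
  assumes "c \<ge> 1"
  shows "summable (hyp_term c)"
proof (rule summable_comparison_test)
  show "\<exists>N. \<forall>n\<ge>N. norm (hyp_term c n) \<le> 1 / real n ^ 2"
  proof (intro exI[of _ 1] allI impI)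
    fix n :: nat
    assume "n \<ge> 1"
    have "\<bar>hyp_term c n\<bar> \<le> c * \<bar>hyp_term c n\<bar>"
      using assms by (simp add: mult_le_cancel_right1)
    with hyp_term_bound[OF assms \<open>n \<ge> 1\<close>] show "norm (hyp_term c n) \<le> 1 / real n ^ 2"
      by simp
  qed
  show "summable (\<lambda>n. 1 / real n ^ 2)"
    using inverse_power_summable[of 2] by (simp add: inverse_eq_divide)
qed

lemma summable_real_powr_three_halves: "summable (\<lambda>n::nat. real n powr (-3/2))"
  by (simp add: summable_real_powr_iff)

lemma hyp_dterm_bound:
  assumes "c \<ge> 1"
  shows "norm (hyp_term c n * shifted_harm c n) \<le> 2 / c * real n powr (-3/2)"
proof (cases "n = 0")
  case False
  then have n: "n \<ge> 1" "real n > 0" by simp_all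
  have "norm (hyp_term c n * shifted_harm c n) = \<bar>hyp_term c n\<bar> * shifted_harm c n"
    using shifted_harm_nonneg[of c n] assms by (simp add: abs_mult)
  also have "\<dots> \<le> 1 / (c * real n ^ 2) * (2 * sqrt (real n))"
    using hyp_term_abs_le[OF assms n(1)] shifted_harm_nonneg[of c n] assms
      order.trans[OF shifted_harm_le_harm[OF assms] harm_le_two_sqrt]
    by (intro mult_mono) auto
  also have "\<dots> = 2 / c * (real n powr (1/2) / real n powr 2)"
    using n by (simp add: powr_half_sqrt powr_numeral)
  also have "\<dots> = 2 / c * real n powr (-3/2)"
    using powr_diff[of "real n" "1/2" 2] by simp
  finally show ?thesis .
qed (simp add: shifted_harm_def)

lemma hyp_dterm_summable:
  assumes "c \<ge> 1"
  shows "summable (\<lambda>n. hyp_term c n * shifted_harm c n)"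
proof (rule summable_comparison_test[of _ "\<lambda>n. 2 / c * real n powr (-3/2)"])
  show "\<exists>N. \<forall>n\<ge>N. norm (hyp_term c n * shifted_harm c n) \<le> 2 / c * real n powr (-3/2)"
    using hyp_dterm_bound[OF assms] by blast
qed (intro summable_mult summable_real_powr_three_halves)

lemma hyp_dsum_bound:
  assumes "c \<ge> 1"
  shows "\<bar>hyp_dsum c\<bar> \<le> 2 / c * (\<Sum>n. real n powr (-3/2))"
proof -
  have "norm (hyp_dsum c) \<le> (\<Sum>n. 2 / c * real n powr (-3/2))"
    unfolding hyp_dsum_def using hyp_dterm_bound[OF assms]
    by (intro norm_suminf_le summable_mult summable_real_powr_three_halves) auto
  also have "\<dots> = 2 / c * (\<Sum>n. real n powr (-3/2))"
    by (rule suminf_mult[OF summable_real_powr_three_halves])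
  finally show ?thesis by simp
qed

section \<open>Contiguous relations\<close>

lemma hyp_contig_partial:
  assumes "c > 0"
  shows "(\<Sum>n<N. c^2 * hyp_term c n - (c^2 - 1/4) * hyp_term (c + 1) n)
           = - c * real N * hyp_term c N"
proof (induction N)
  case (Suc N)
  have "c + real N \<noteq> 0" "real N + 1 \<noteq> 0"
    using assms by linarith+
  with Suc.IH show ?case
    unfolding hyp_term_shift[OF assms]
    by (simp add: divide_simps) (simp add: algebra_simps power2_eq_square)
qed simp

text \<open>The derivative with respect to \<open>c\<close> of the previous identity.\<close>

lemma hyp_contig_deriv_partial:
  assumes "c > 0"
  shows "(\<Sum>n<N. 2 * c * hyp_term c n - c^2 * (hyp_term c n * shifted_harm c n)
            - 2 * c * hyp_term (c + 1) n + (c^2 - 1/4) * (hyp_term (c + 1) n * shifted_harm (c + 1) n))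
           = - real N * hyp_term c N * (1 - c * shifted_harm c N)"
proof (induction N)
  case (Suc N)
  have "c \<noteq> 0" "c + real N \<noteq> 0" "real N + 1 \<noteq> 0"
    using assms by linarith+
  with Suc.IH show ?case
    unfolding hyp_term_shift[OF assms] shifted_harm_shift shifted_harm_Suc
    by (simp add: divide_simps) (simp add: algebra_simps power2_eq_square)
qed simp

lemma hyp_sum_contig:
  assumes "c \<ge> 1"
  shows "c^2 * hyp_sum c = (c^2 - 1/4) * hyp_sum (c + 1)"
proof -
  have "(\<lambda>n. c^2 * hyp_term c n - (c^2 - 1/4) * hyp_term (c + 1) n)
          sums (c^2 * hyp_sum c - (c^2 - 1/4) * hyp_sum (c + 1))"
    unfolding hyp_sum_def using assms
    by (intro sums_diff sums_mult summable_sums hyp_term_summable) simp_all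
  moreover have "(\<lambda>n. c^2 * hyp_term c n - (c^2 - 1/4) * hyp_term (c + 1) n) sums 0"
    unfolding sums_def hyp_contig_partial[OF order.strict_trans2[OF zero_less_one assms]]
  proof (rule Lim_null_comparison)
    show "\<forall>\<^sub>F N in sequentially. norm (- c * real N * hyp_term c N) \<le> 1 / real N"
      unfolding eventually_sequentially
    proof (intro exI[of _ 1] allI impI)
      fix N :: nat
      assume "N \<ge> 1"
      then have "c * real N * \<bar>hyp_term c N\<bar> \<le> c * real N * (1 / (c * real N ^ 2))"
        using hyp_term_abs_le[OF assms] assms by (intro mult_left_mono) auto
      then show "norm (- c * real N * hyp_term c N) \<le> 1 / real N"
        using assms \<open>N \<ge> 1\<close> by (simp add: abs_mult power2_eq_square)
    qed
  qed (rule lim_inverse_n')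
  ultimately show ?thesis
    using sums_unique2 by fastforce
qed

lemma hyp_dsum_contig:
  assumes "c \<ge> 1"
  shows "2 * c * hyp_sum c - c^2 * hyp_dsum c - 2 * c * hyp_sum (c + 1)
           + (c^2 - 1/4) * hyp_dsum (c + 1) = 0"
proof -
  let ?f = "\<lambda>n. 2 * c * hyp_term c n - c^2 * (hyp_term c n * shifted_harm c n)
            - 2 * c * hyp_term (c + 1) n + (c^2 - 1/4) * (hyp_term (c + 1) n * shifted_harm (c + 1) n)"
  have "?f sums (2 * c * hyp_sum c - c^2 * hyp_dsum c - 2 * c * hyp_sum (c + 1)
           + (c^2 - 1/4) * hyp_dsum (c + 1))"
    unfolding hyp_sum_def hyp_dsum_def using assms
    by (intro sums_add sums_diff sums_mult summable_sums hyp_term_summable hyp_dterm_summable) simp_all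
  moreover have "?f sums 0"
    unfolding sums_def hyp_contig_deriv_partial[OF order.strict_trans2[OF zero_less_one assms]]
  proof (rule Lim_null_comparison)
    show "\<forall>\<^sub>F N in sequentially. norm (- real N * hyp_term c N * (1 - c * shifted_harm c N))
            \<le> (1 + 2 * sqrt (real N)) / real N"
      unfolding eventually_sequentially
    proof (intro exI[of _ 1] allI impI)
      fix N :: nat
      assume N: "N \<ge> 1"
      have "0 \<le> c * shifted_harm c N" "c * shifted_harm c N \<le> c * harm N"
        using assms shifted_harm_nonneg[of c N] shifted_harm_le_harm[OF assms, of N] by auto
      then have "\<bar>1 - c * shifted_harm c N\<bar> \<le> 1 + c * harm N"
        by linarith
      then have "real N * \<bar>hyp_term c N\<bar> * \<bar>1 - c * shifted_harm c N\<bar>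
          \<le> real N * (1 / (c * real N ^ 2)) * (1 + c * harm N)"
        using hyp_term_abs_le[OF assms N] assms by (intro mult_mono mult_left_mono) auto
      also have "\<dots> = (1 / c + harm N) / real N"
        using assms by (simp add: field_simps power2_eq_square)
      also have "\<dots> \<le> (1 + 2 * sqrt (real N)) / real N"
        using harm_le_two_sqrt[of N] assms by (intro divide_right_mono add_mono) simp_all
      finally show "norm (- real N * hyp_term c N * (1 - c * shifted_harm c N))
          \<le> (1 + 2 * sqrt (real N)) / real N"
        by (simp add: abs_mult)
    qed
    show "(\<lambda>N. (1 + 2 * sqrt (real N)) / real N) \<longlonglongrightarrow> 0"
      by real_asymp
  qed
  ultimately show ?thesis
    using sums_unique2 by fastforce
qed

lemma central_sq_wallis_prod:
  "(2 * real N + 1) * central_sq N * (\<Prod>k=1..N. 4 * real k ^ 2 / (4 * real k ^ 2 - 1)) = 1"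
proof (induction N)
  case (Suc N)
  define P where "P = (\<Prod>k=1..N. 4 * real k ^ 2 / (4 * real k ^ 2 - 1))"
  have "4 * real (Suc N) ^ 2 - 1 = (2 * real N + 1) * (2 * real N + 3)"
    by (simp add: power2_eq_square algebra_simps)
  then have prod: "(\<Prod>k=1..Suc N. 4 * real k ^ 2 / (4 * real k ^ 2 - 1))
               = P * (4 * real (Suc N) ^ 2 / ((2 * real N + 1) * (2 * real N + 3)))"
    by (simp add: P_def prod.cl_ivl_Suc)
  have "2 * real N + 1 \<noteq> 0" "2 * real N + 2 \<noteq> 0" "2 * real N + 3 \<noteq> 0"
    by linarith+
  then have "(2 * real (Suc N) + 1) * central_sq (Suc N) * (\<Prod>k=1..Suc N. 4 * real k ^ 2 / (4 * real k ^ 2 - 1))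
      = (2 * real N + 1) * central_sq N * P"
    unfolding prod central_sq_Suc
    by (simp add: divide_simps) (simp add: algebra_simps power2_eq_square)
  also have "\<dots> = 1"
    unfolding P_def by (rule Suc.IH)
  finally show ?case .
qed (simp add: central_sq_def)

lemma central_sq_lim: "(\<lambda>N. (2 * real N + 1) * central_sq N) \<longlonglongrightarrow> 2 / pi"
proof -
  have "(\<lambda>N. inverse (\<Prod>k=1..N. 4 * real k ^ 2 / (4 * real k ^ 2 - 1))) \<longlonglongrightarrow> inverse (pi / 2)"
    by (intro tendsto_inverse wallis) simp
  moreover have "inverse (\<Prod>k=1..N. 4 * real k ^ 2 / (4 * real k ^ 2 - 1)) = (2 * real N + 1) * central_sq N"
    for N
    using central_sq_wallis_prod[of N] by (simp add: inverse_unique mult.commute)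
  ultimately show ?thesis by simp
qed

lemma hyp_sum_one: "hyp_sum 1 = 2 / pi"
proof -
  have "(\<Sum>n<Suc N. hyp_term 1 n) = (2 * real N + 1) * central_sq N" for N
  proof (induction N)
    case (Suc N)
    have "2 * real N + 1 \<noteq> 0" "2 * real N + 2 \<noteq> 0"
      by linarith+
    with Suc.IH show ?case
      unfolding sum.lessThan_Suc[of _ "Suc N"] hyp_term_one[of "Suc N"] central_sq_Suc
      by (simp add: divide_simps) (simp add: algebra_simps power2_eq_square)
  qed (simp add: central_sq_def)
  then have "hyp_term 1 sums (2 / pi)"
    using central_sq_lim by (rule sums_by_partial_sums)
  then show ?thesis
    unfolding hyp_sum_def by (rule sums_unique[symmetric])
qed

lemma hyp_sum_ge: "hyp_sum (real m + 1) \<ge> 2 / pi"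
proof (induction m)
  case 0
  then show ?case by (simp add: hyp_sum_one)
next
  case (Suc m)
  define c where "c = real m + 1"
  have c: "c \<ge> 1"
    by (simp add: c_def)
  then have "c^2 \<ge> 1"
    by simp
  then have d: "c^2 - 1/4 > 0"
    by simp
  have "hyp_sum c > 0"
    using Suc.IH unfolding c_def by (rule less_le_trans[rotated]) simp
  then have "(c^2 - 1/4) * hyp_sum c \<le> c^2 * hyp_sum c"
    by simp
  then have "(c^2 - 1/4) * hyp_sum c \<le> (c^2 - 1/4) * hyp_sum (c + 1)"
    using hyp_sum_contig[OF c] by simp
  then have "hyp_sum c \<le> hyp_sum (c + 1)"
    using d by simp
  with Suc.IH show ?case
    by (simp add: c_def add_ac)
qed

lemma hyp_sum_pos: "hyp_sum (real m + 1) > 0"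
  using hyp_sum_ge[of m] by (rule less_le_trans[rotated]) simp

lemma contig_ratio_step:
  fixes c F0 F1 K0 K1 :: real
  assumes "c \<ge> 1" and "F0 > 0"
    and "c^2 * F0 = (c^2 - 1/4) * F1"
    and "2 * c * F0 - c^2 * K0 - 2 * c * F1 + (c^2 - 1/4) * K1 = 0"
  shows "K0 / F0 = K1 / F1 + (2 / c - 2 / (2 * c - 1) - 2 / (2 * c + 1))"
proof -
  define d where "d = c^2 - 1/4"
  have "c^2 \<ge> 1"
    using assms(1) by simp
  then have "d > 0"
    by (simp add: d_def)
  have c: "c > 0" "2 * c - 1 > 0" "2 * c + 1 > 0"
    using assms(1) by simp_all
  have F1: "F1 = c^2 * F0 / d"
    using assms(3) \<open>d > 0\<close> unfolding d_def[symmetric] by (simp add: field_simps)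
  have K0: "K0 = (2 * c * F0 - 2 * c * F1 + d * K1) / c^2"
    using assms(4) c(1) unfolding d_def[symmetric] by (simp add: field_simps)
  have d: "d = (2 * c - 1) * (2 * c + 1) / 4"
    by (simp add: d_def power2_eq_square algebra_simps)
  show ?thesis
    unfolding K0 F1 d using c assms(2)
    by (simp add: divide_simps) (simp add: algebra_simps power2_eq_square)
qed

lemma hyp_ratio_chain:
  "hyp_dsum 1 / hyp_sum 1 = hyp_dsum (real m + 1) / hyp_sum (real m + 1)
     + 4 * (harm m - harm (2 * m)) + 2 - 2 / (2 * real m + 1)"
proof (induction m)
  case 0
  then show ?case by (simp add: harm_def)
next
  case (Suc m)
  define c where "c = real m + 1"
  have c: "c \<ge> 1"
    by (simp add: c_def)
  have "hyp_dsum c / hyp_sum c = hyp_dsum (c + 1) / hyp_sum (c + 1)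
          + (2 / c - 2 / (2 * c - 1) - 2 / (2 * c + 1))"
    using hyp_sum_pos[of m] unfolding c_def[symmetric]
    by (rule contig_ratio_step[OF c _ hyp_sum_contig[OF c] hyp_dsum_contig[OF c]])
  moreover have "2 / c - 2 / (2 * c - 1) - 2 / (2 * c + 1) + 4 * (harm m - harm (2 * m)) - 2 / (2 * real m + 1)
      = 4 * (harm (Suc m) - harm (2 * Suc m)) - 2 / (2 * real (Suc m) + 1)"
  proof -
    have "2 * real m + 1 \<noteq> 0" "2 * real m + 2 \<noteq> 0" "real m + 1 \<noteq> 0" "2 * real m + 3 \<noteq> 0"
      by linarith+
    then show ?thesis
      unfolding harm_double_Suc harm_Suc c_def
      by (simp add: inverse_eq_divide divide_simps) (simp add: algebra_simps)
  qed
  ultimately show ?case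
    using Suc.IH unfolding c_def by (simp add: add_ac)
qed

lemma hyp_ratio_lim: "(\<lambda>m. hyp_dsum (real m + 1) / hyp_sum (real m + 1)) \<longlonglongrightarrow> 0"
proof (rule Lim_null_comparison)
  define S where "S = (\<Sum>n. real n powr (-3/2))"
  have "S \<ge> 0"
    unfolding S_def by (intro suminf_nonneg summable_real_powr_three_halves) simp
  show "\<forall>\<^sub>F m in sequentially. norm (hyp_dsum (real m + 1) / hyp_sum (real m + 1))
          \<le> pi * S * (1 / (real m + 1))"
  proof (intro always_eventually allI)
    fix m :: nat
    have "norm (hyp_dsum (real m + 1) / hyp_sum (real m + 1))
            = \<bar>hyp_dsum (real m + 1)\<bar> / hyp_sum (real m + 1)"
      using hyp_sum_pos[of m] by simp
    also have "\<dots> \<le> (2 / (real m + 1) * S) / (2 / pi)"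
      using hyp_dsum_bound[of "real m + 1"] hyp_sum_ge[of m] \<open>S \<ge> 0\<close>
      unfolding S_def[symmetric] by (intro frac_le) auto
    also have "\<dots> = pi * S * (1 / (real m + 1))"
      by (simp add: field_simps)
    finally show "norm (hyp_dsum (real m + 1) / hyp_sum (real m + 1)) \<le> pi * S * (1 / (real m + 1))" .
  qed
  have "(\<lambda>m. 1 / (real m + 1)) \<longlonglongrightarrow> 0"
    by real_asymp
  then show "(\<lambda>m. pi * S * (1 / (real m + 1))) \<longlonglongrightarrow> 0"
    by (rule tendsto_mult_right_zero)
qed

lemma hyp_dsum_one: "hyp_dsum 1 = 2 / pi * (2 - 4 * ln 2)"
proof -
  have "(\<lambda>m. harm m - harm (2 * m) :: real) \<longlonglongrightarrow> - ln 2"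
    using tendsto_minus[OF harm_double_lim] by simp
  moreover have "(\<lambda>m. 2 / (2 * real m + 1)) \<longlonglongrightarrow> 0"
    by real_asymp
  ultimately have "(\<lambda>m. hyp_dsum (real m + 1) / hyp_sum (real m + 1)
      + 4 * (harm m - harm (2 * m)) + 2 - 2 / (2 * real m + 1)) \<longlonglongrightarrow> 0 + 4 * (- ln 2) + 2 - 0"
    by (intro tendsto_intros hyp_ratio_lim)
  then have "hyp_dsum 1 / hyp_sum 1 = 2 - 4 * ln 2"
    unfolding hyp_ratio_chain[symmetric] by (simp add: LIMSEQ_const_iff)
  then show ?thesis
    by (simp add: hyp_sum_one field_simps)
qed

lemma harm_double_diff_sums:
  "(\<lambda>n. hyp_term 1 n * (harm (2 * n) - harm n)) sums (2 / pi * (ln 2 - 1))"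
proof (rule sums_by_partial_sums)
  show "(\<Sum>n<Suc N. hyp_term 1 n * (harm (2 * n) - harm n))
          = (2 * real N + 1) * central_sq N * (harm (2 * N) - harm N - 1) + central_sq N" for N
  proof (induction N)
    case (Suc N)
    have "2 * real N + 1 \<noteq> 0" "2 * real N + 2 \<noteq> 0" "real N + 1 \<noteq> 0"
      by linarith+
    with Suc.IH show ?case
      unfolding sum.lessThan_Suc[of _ "Suc N"] hyp_term_one[of "Suc N"] central_sq_Suc
        harm_double_Suc harm_Suc
      by (simp add: inverse_eq_divide divide_simps) (simp add: algebra_simps power2_eq_square)
  qed (simp add: central_sq_def harm_def)
  have "central_sq N = (2 * real N + 1) * central_sq N * (1 / (2 * real N + 1))" for N
    by (simp add: add_pos_nonneg)
  moreover have "(\<lambda>N. (2 * real N + 1) * central_sq N * (1 / (2 * real N + 1))) \<longlonglongrightarrow> 2 / pi * 0"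
    by (intro tendsto_mult central_sq_lim) real_asymp
  ultimately have "central_sq \<longlonglongrightarrow> 0"
    by simp
  from tendsto_add[OF tendsto_mult[OF central_sq_lim tendsto_diff[OF harm_double_lim tendsto_const[of "1 :: real"]]] this]
  show "(\<lambda>N. (2 * real N + 1) * central_sq N * (harm (2 * N) - harm N - 1) + central_sq N)
          \<longlonglongrightarrow> 2 / pi * (ln 2 - 1)"
    by simp
qed

theorem mainTheorem9:
  shows "(\<lambda>n::nat. (real ((2*n) choose n))^2 * harm (2*n) / (16^n * (2 * real n - 1)))
           sums ((6 * ln 2 - 2) / pi)"
proof -
  have "(\<lambda>n. hyp_term 1 n * harm n) sums hyp_dsum 1"
    using summable_sums[OF hyp_dterm_summable[of 1]] by (simp add: hyp_dsum_def shifted_harm_one)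
  then have "(\<lambda>n. - (hyp_term 1 n * (harm (2 * n) - harm n)) - hyp_term 1 n * harm n)
               sums (- (2 / pi * (ln 2 - 1)) - hyp_dsum 1)"
    by (intro sums_diff sums_minus harm_double_diff_sums)
  moreover have "- (hyp_term 1 n * (harm (2 * n) - harm n)) - hyp_term 1 n * harm n
                   = real ((2 * n) choose n) ^ 2 * harm (2 * n) / (16 ^ n * (2 * real n - 1))" for n
    using two_real_minus_one_neq_zero[of n]
    by (simp add: hyp_term_one central_sq_def divide_simps) (simp add: algebra_simps)
  moreover have "- (2 / pi * (ln 2 - 1)) - hyp_dsum 1 = (6 * ln 2 - 2) / pi"
    by (simp add: hyp_dsum_one field_simps)
  ultimately show ?thesis
    by simp
qed

end
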